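(* Let $v$ be a pure bargaining game on $N$, i.e., $v(S)=0$ for all $S\ne N$, and let $n=|N|$. Let $i\in N$ and let $v_i$ be the component game (the unique $v_i\in\ell^2(V)$ with $v_i(\emptyset)=0$ and $\mathrm{d}v_i=P\mathrm{d}_iv$). Then for every $S\subset N\setminus\{i\}$, $$v_i(S\cup\{i\}) = \frac{1}{n2^n}\left(1+\frac{\binom{n}{0}+\cdots+\binom{n}{|S|}}{\binom{n-1}{|S|}}\right)v(N),\qquad v_i(S) = \frac{1}{n2^n}\left(1-\frac{\binom{n}{0}+\cdots+\binom{n}{|S|}}{\binom{n-1}{|S|}}\right)v(N).$$
   Context: Let $N$ be a finite set of players. A game is a function $v\colon 2^N\to\mathbb{R}$ with $v(\emptyset)=0$. The hypercube graph $G=(V,E)$ has $V=2^N$ and oriented edges $E=\{(S,S\cup\{i\}) : i\in N,\ S\subset N\setminus\{i\}\}$. $\ell^2(V)$ and $\ell^2(E)$ are the spaces of real functions on $V$ and $E$ with the standard inner products $\sum_{S}u(S)w(S)$ and $\sum_{e}f(e)g(e)$. $\mathrm{d}\colon \ell^2(V)\to\ell^2(E)$ is $\mathrm{d}u(S,S\cup\{i\}) = u(S\cup\{i\})-u(S)$. For $i\in N$, $\mathrm{d}_i\colon\ell^2(V)\to\ell^2(E)$ is defined by $\mathrm{d}_i u(S,S\cup\{j\}) = u(S\cup\{i\})-u(S)$ if $j=i$ and $0$ if $j\ne i$. $P$ is the orthogonal projection of $\ell^2(E)$ onto the range $\mathcal{R}(\mathrm{d})$. *)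

theory Defs
  imports Complex_Main
begin

(* Vertices of the hypercube: subsets of N.  l2(V) = real functions on 2^N, represented
   as functions 'a set => real that vanish outside Pow N. *)
definition l2V :: "'a set \<Rightarrow> ('a set \<Rightarrow> real) set" where
  "l2V N = {u. \<forall>S. \<not> S \<subseteq> N \<longrightarrow> u S = 0}"

definition hedges :: "'a set \<Rightarrow> ('a set \<times> 'a set) set" where
  "hedges N = {(S, insert i S) | S i. i \<in> N \<and> S \<subseteq> N - {i}}"

definition l2E :: "'a set \<Rightarrow> ('a set \<times> 'a set \<Rightarrow> real) set" where
  "l2E N = {f. \<forall>e. e \<notin> hedges N \<longrightarrow> f e = 0}"

definition innerE :: "'a set \<Rightarrow> ('a set \<times> 'a set \<Rightarrow> real) \<Rightarrow> ('a set \<times> 'a set \<Rightarrow> real) \<Rightarrow> real" where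
  "innerE N f g = (\<Sum>e\<in>hedges N. f e * g e)"

definition grad :: "'a set \<Rightarrow> ('a set \<Rightarrow> real) \<Rightarrow> ('a set \<times> 'a set \<Rightarrow> real)" where
  "grad N u = (\<lambda>e. if e \<in> hedges N then u (snd e) - u (fst e) else 0)"

definition grad_i :: "'a set \<Rightarrow> 'a \<Rightarrow> ('a set \<Rightarrow> real) \<Rightarrow> ('a set \<times> 'a set \<Rightarrow> real)" where
  "grad_i N i u = (\<lambda>e. if e \<in> hedges N \<and> snd e = insert i (fst e) \<and> i \<notin> fst e
                        then u (insert i (fst e)) - u (fst e) else 0)"

definition range_grad :: "'a set \<Rightarrow> ('a set \<times> 'a set \<Rightarrow> real) set" where
  "range_grad N = grad N ` l2V N"

definition projP :: "'a set \<Rightarrow> ('a set \<times> 'a set \<Rightarrow> real) \<Rightarrow> ('a set \<times> 'a set \<Rightarrow> real)" where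
  "projP N f = (THE g. g \<in> range_grad N \<and>
                   (\<forall>h \<in> range_grad N. innerE N (\<lambda>e. f e - g e) h = 0))"

definition component_game :: "'a set \<Rightarrow> ('a set \<Rightarrow> real) \<Rightarrow> 'a \<Rightarrow> ('a set \<Rightarrow> real)" where
  "component_game N v i = (THE w. w \<in> l2V N \<and> w {} = 0 \<and> grad N w = projP N (grad_i N i v))"

end

theory Submission
  imports Defs
begin

text \<open>The component game is characterised by \<open>v\<^sub>i(\<emptyset>) = 0\<close> and
  \<open>d\<^sup>*(d\<^sub>i v - d v\<^sub>i) = 0\<close>, the latter saying that \<open>d\<^sub>i v - d v\<^sub>i\<close> is orthogonal
  to the range of \<open>d\<close>. Both sides are computed vertexwise: \<open>d\<^sup>* d\<close> is the graph Laplacian of the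
  hypercube, and \<open>d\<^sup>* d\<^sub>i v (T) = v(T) - v(T \<triangle> {i})\<close>, which for a pure bargaining game
  vanishes except at \<open>T = N\<close> and \<open>T = N - {i}\<close>. The claimed \<open>v\<^sub>i\<close> depends only on
  whether \<open>i \<in> T\<close> and on \<open>s = |T - {i}|\<close>, so its Laplacian reduces to the three-term
  recurrence \<open>(n+1) a(s) - s a(s-1) - (n-1-s) a(s+1) = [s = n-1] n 2\<^sup>n\<close> for the ratio
  \<open>a(s) = (C(n,0) + \<dots> + C(n,s)) / C(n-1,s)\<close>, which follows from
  \<open>(k+1) C(m,k+1) = (m-k) C(m,k)\<close>.\<close>

lemma Suc_times_choose_Suc: "Suc k * (m choose Suc k) = (m - k) * (m choose k)"
  by (metis binomial_absorption binomial_absorb_comp)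

definition binom_ratio :: "nat \<Rightarrow> nat \<Rightarrow> real" where
  "binom_ratio n s = real (\<Sum>k\<le>s. n choose k) / real (n - 1 choose s)"

lemma binom_ratio_0 [simp]: "binom_ratio n 0 = 1"
  by (simp add: binom_ratio_def)

lemma binom_ratio_pred:
  assumes "s \<le> m"
  shows "real s * binom_ratio (Suc m) (s - 1)
           = real (Suc m - s) * real (\<Sum>k<s. Suc m choose k) / real (m choose s)"
proof (cases s)
  case (Suc k)
  define B where "B = real (\<Sum>k<s. Suc m choose k)"
  have eq: "real s * real (m choose s) = real (Suc m - s) * real (m choose k)"
    using Suc_times_choose_Suc[of k m] Suc by (metis diff_Suc_Suc of_nat_mult)
  have pos: "real (m choose s) > 0" "real (m choose k) > 0"
    using assms Suc by auto
  have "real s * binom_ratio (Suc m) (s - 1) = real s * (B / real (m choose k))"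
    using Suc by (simp add: binom_ratio_def B_def lessThan_Suc_atMost)
  also have "\<dots> = real s * real (m choose s) * B / (real (m choose k) * real (m choose s))"
    using pos by simp
  also have "\<dots> = real (Suc m - s) * B / real (m choose s)"
    unfolding eq using pos by simp
  finally show ?thesis
    by (simp add: B_def)
qed simp

lemma binom_ratio_succ:
  assumes "s < m"
  shows "real (m - s) * binom_ratio (Suc m) (s + 1)
           = real (Suc s) * real (\<Sum>k\<le>Suc s. Suc m choose k) / real (m choose s)"
proof -
  define B where "B = real (\<Sum>k\<le>Suc s. Suc m choose k)"
  have eq: "real (Suc s) * real (m choose Suc s) = real (m - s) * real (m choose s)"
    using Suc_times_choose_Suc[of s m] by (metis of_nat_mult)
  have pos: "real (m choose s) > 0" "real (m choose Suc s) > 0"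
    using assms by auto
  have "real (m - s) * binom_ratio (Suc m) (s + 1) = real (m - s) * (B / real (m choose Suc s))"
    by (simp add: binom_ratio_def B_def)
  also have "\<dots> = real (m - s) * real (m choose s) * B / (real (m choose Suc s) * real (m choose s))"
    using pos by simp
  also have "\<dots> = real (Suc s) * B / real (m choose s)"
    unfolding eq[symmetric] using pos by simp
  finally show ?thesis
    by (simp add: B_def)
qed

lemma binom_ratio_recurrence:
  assumes "s \<le> m"
  shows "real (m + 2) * binom_ratio (Suc m) s - real s * binom_ratio (Suc m) (s - 1)
           - real (m - s) * binom_ratio (Suc m) (s + 1)
         = (if s = m then real (Suc m) * 2 ^ Suc m else 0)"
proof -
  define b where "b = real (\<Sum>k<s. Suc m choose k)"
  define x where "x = real (Suc m choose s)"
  define C where "C = real (m choose s)"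
  have "(\<Sum>k\<le>s. Suc m choose k) = (\<Sum>k<s. Suc m choose k) + (Suc m choose s)"
    by (simp add: lessThan_Suc_atMost[symmetric])
  then have sum_s: "real (\<Sum>k\<le>s. Suc m choose k) = b + x"
    unfolding b_def x_def by (simp only: of_nat_add)
  have pos: "C > 0"
    using assms by (simp add: C_def)
  have ratio_s: "binom_ratio (Suc m) s = (b + x) / C"
    unfolding binom_ratio_def sum_s by (simp add: C_def)
  have pred: "real s * binom_ratio (Suc m) (s - 1) = real (Suc m - s) * b / C"
    using binom_ratio_pred[OF assms] by (simp add: b_def C_def)
  show ?thesis
  proof (cases "s = m")
    case True
    have "real (\<Sum>k\<le>Suc m. Suc m choose k) = 2 ^ Suc m"
      by (simp only: choose_row_sum of_nat_power of_nat_numeral)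
    then have row: "b + x + 1 = 2 ^ Suc m"
      using True sum_s by simp
    have "x = real (Suc m)" "C = 1"
      using True by (simp_all add: x_def C_def)
    then have "real (m + 2) * binom_ratio (Suc m) s - real s * binom_ratio (Suc m) (s - 1)
           - real (m - s) * binom_ratio (Suc m) (s + 1) = real (Suc m) * (b + x + 1)"
      unfolding ratio_s pred using True by (simp add: algebra_simps)
    then show ?thesis
      using True row by simp
  next
    case False
    define y where "y = real (Suc m choose Suc s)"
    define d where "d = real (Suc m - s)"
    have y: "real (Suc s) * y = d * x"
      unfolding d_def x_def y_def using Suc_times_choose_Suc[of s "Suc m"] by (metis of_nat_mult)
    have d: "real (m + 2) - d - real (Suc s) = 0"
      using assms by (simp add: d_def of_nat_diff)
    have "real (\<Sum>k\<le>Suc s. Suc m choose k) = b + x + y"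
      using sum_s by (simp add: y_def)
    then have succ: "real (m - s) * binom_ratio (Suc m) (s + 1) = real (Suc s) * (b + x + y) / C"
      using binom_ratio_succ[of s m] False assms by (simp add: C_def)
    have "real (m + 2) * binom_ratio (Suc m) s - real s * binom_ratio (Suc m) (s - 1)
           - real (m - s) * binom_ratio (Suc m) (s + 1)
          = (real (m + 2) * (b + x) - d * b - real (Suc s) * (b + x + y)) / C"
      unfolding ratio_s pred succ d_def by (simp add: diff_divide_distrib)
    also have "real (m + 2) * (b + x) - d * b - real (Suc s) * (b + x + y)
             = (real (m + 2) - d - real (Suc s)) * (b + x) + (d * x - real (Suc s) * y)"
      by (simp add: algebra_simps)
    finally show ?thesis
      using False d y by simp
  qed
qed

lemma finite_hedges: "finite N \<Longrightarrow> finite (hedges N)"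
  by (rule finite_subset[of _ "Pow N \<times> Pow N"]) (auto simp: hedges_def)

lemma hedge_downI: "T \<subseteq> N \<Longrightarrow> j \<in> T \<Longrightarrow> (T - {j}, T) \<in> hedges N"
  unfolding hedges_def by (intro CollectI exI[of _ "T - {j}"] exI[of _ j]) (auto simp: insert_absorb)

lemma hedge_upI: "T \<subseteq> N \<Longrightarrow> j \<in> N - T \<Longrightarrow> (T, insert j T) \<in> hedges N"
  unfolding hedges_def by blast

lemma sum_hedges_up:
  assumes "finite N"
  shows "(\<Sum>e\<in>hedges N. g e) = (\<Sum>T\<in>Pow N. \<Sum>j\<in>N - T. g (T, insert j T))"
proof -
  have "hedges N = (\<lambda>(T, j). (T, insert j T)) ` (SIGMA T:Pow N. N - T)"
    unfolding hedges_def by (auto simp: image_iff)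
  moreover have "inj_on (\<lambda>(T, j). (T, insert j T)) (SIGMA T:Pow N. N - T)"
    by (auto simp: inj_on_def)
  ultimately show ?thesis
    using assms by (simp add: sum.reindex sum.Sigma case_prod_unfold)
qed

lemma sum_hedges_down:
  assumes "finite N"
  shows "(\<Sum>e\<in>hedges N. g e) = (\<Sum>T\<in>Pow N. \<Sum>j\<in>T. g (T - {j}, T))"
proof -
  have "hedges N = (\<lambda>(T, j). (T - {j}, T)) ` (SIGMA T:Pow N. T)"
    by (auto simp: hedges_def image_iff hedge_downI intro!: bexI[of _ "(insert _ _, _)"])
  moreover have "inj_on (\<lambda>(T, j). (T - {j}, T)) (SIGMA T:Pow N. T)"
    by (auto simp: inj_on_def)
  ultimately show ?thesis
    using assms by (simp add: sum.reindex sum.Sigma case_prod_unfold finite_subset)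
qed

text \<open>The adjoint \<open>d\<^sup>*\<close> of the gradient, see \<open>innerE_grad\<close>.\<close>

definition divergence :: "'a set \<Rightarrow> ('a set \<times> 'a set \<Rightarrow> real) \<Rightarrow> 'a set \<Rightarrow> real" where
  "divergence N F T = (\<Sum>j\<in>T. F (T - {j}, T)) - (\<Sum>j\<in>N - T. F (T, insert j T))"

lemma innerE_grad:
  assumes "finite N"
  shows "innerE N F (grad N u) = (\<Sum>T\<in>Pow N. u T * divergence N F T)"
proof -
  have "innerE N F (grad N u) = (\<Sum>e\<in>hedges N. F e * u (snd e)) - (\<Sum>e\<in>hedges N. F e * u (fst e))"
    unfolding innerE_def grad_def by (simp add: sum_subtractf[symmetric] algebra_simps)
  also have "\<dots> = (\<Sum>T\<in>Pow N. \<Sum>j\<in>T. F (T - {j}, T) * u T)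
                  - (\<Sum>T\<in>Pow N. \<Sum>j\<in>N - T. F (T, insert j T) * u T)"
    using assms by (simp add: sum_hedges_down[of N "\<lambda>e. F e * u (snd e)"]
                              sum_hedges_up[of N "\<lambda>e. F e * u (fst e)"])
  also have "\<dots> = (\<Sum>T\<in>Pow N. u T * divergence N F T)"
    unfolding divergence_def
    by (simp add: sum_subtractf[symmetric] sum_distrib_left sum_distrib_right algebra_simps)
  finally show ?thesis .
qed

lemma projP_eqI:
  assumes fin: "finite N" and g: "g \<in> range_grad N"
    and orth: "\<And>h. h \<in> range_grad N \<Longrightarrow> innerE N (\<lambda>e. f e - g e) h = 0"
  shows "projP N f = g"
  unfolding projP_def
proof (rule the_equality)
  show "g \<in> range_grad N \<and> (\<forall>h\<in>range_grad N. innerE N (\<lambda>e. f e - g e) h = 0)"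
    using g orth by blast
next
  fix g' assume g': "g' \<in> range_grad N \<and> (\<forall>h\<in>range_grad N. innerE N (\<lambda>e. f e - g' e) h = 0)"
  obtain u u' where u: "u \<in> l2V N" "g = grad N u" and u': "u' \<in> l2V N" "g' = grad N u'"
    using g g' by (auto simp: range_grad_def)
  define h where "h = grad N (\<lambda>T. u' T - u T)"
  have h_range: "h \<in> range_grad N"
    using u u' unfolding h_def range_grad_def l2V_def by auto
  have h_eq: "h = (\<lambda>e. g' e - g e)"
    using u u' by (auto simp: h_def grad_def)
  \<comment> \<open>The difference of two candidate projections is orthogonal to itself.\<close>
  have "(\<Sum>e\<in>hedges N. (g' e - g e)\<^sup>2)
          = innerE N (\<lambda>e. f e - g e) h - innerE N (\<lambda>e. f e - g' e) h"
    unfolding innerE_def h_eq by (simp add: sum_subtractf[symmetric] power2_eq_square algebra_simps)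
  also have "\<dots> = 0"
    using orth g' h_range by simp
  finally have "\<forall>e\<in>hedges N. g' e = g e"
    using sum_nonneg_eq_0_iff[OF finite_hedges[OF fin], of "\<lambda>e. (g' e - g e)\<^sup>2"] by simp
  then show "g' = g"
    using u u' by (auto simp: grad_def fun_eq_iff)
qed

lemma l2V_eq_if_grad_eq:
  assumes fin: "finite N" and "w \<in> l2V N" "w' \<in> l2V N"
    and empty: "w {} = w' {}" and grad: "grad N w = grad N w'"
  shows "w = w'"
proof
  fix T
  show "w T = w' T"
  proof (cases "T \<subseteq> N")
    case False
    then show ?thesis
      using assms by (auto simp: l2V_def)
  next
    case True
    then have "finite T"
      using fin finite_subset by blast
    then show ?thesis
      using True
    proof (induction T rule: finite_induct)
      case (insert x F)
      have "(F, insert x F) \<in> hedges N"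
        using insert unfolding hedges_def by blast
      then have "w (insert x F) - w F = w' (insert x F) - w' F"
        using fun_cong[OF grad, of "(F, insert x F)"] by (simp add: grad_def)
      then show ?case
        using insert by auto
    qed (use empty in simp)
  qed
qed

lemma component_game_eqI:
  assumes fin: "finite N" and w: "w \<in> l2V N" "w {} = 0"
    and div: "\<And>T. T \<subseteq> N \<Longrightarrow> divergence N (grad N w) T = divergence N (grad_i N i v) T"
  shows "component_game N v i = w"
proof -
  have "innerE N (\<lambda>e. grad_i N i v e - grad N w e) h = 0" if h: "h \<in> range_grad N" for h
  proof -
    obtain u where "h = grad N u"
      using h by (auto simp: range_grad_def)
    moreover have "divergence N (\<lambda>e. grad_i N i v e - grad N w e) T = 0" if "T \<in> Pow N" for T
      using div[of T] that unfolding divergence_def by (simp add: sum_subtractf)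
    ultimately show ?thesis
      by (simp add: innerE_grad[OF fin])
  qed
  then have "projP N (grad_i N i v) = grad N w"
    using w by (intro projP_eqI[OF fin]) (auto simp: range_grad_def)
  then show ?thesis
    unfolding component_game_def
    using w l2V_eq_if_grad_eq[OF fin] by (intro the_equality) auto
qed

definition toggle :: "'a \<Rightarrow> 'a set \<Rightarrow> 'a set" where
  "toggle j T = (if j \<in> T then T - {j} else insert j T)"

lemma divergence_grad:
  assumes fin: "finite N" and T: "T \<subseteq> N"
  shows "divergence N (grad N u) T = (\<Sum>j\<in>N. u T - u (toggle j T))"
proof -
  have "(\<Sum>j\<in>T. grad N u (T - {j}, T)) = (\<Sum>j\<in>T. u T - u (toggle j T))"
    using T by (intro sum.cong) (auto simp: grad_def toggle_def hedge_downI)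
  moreover have "(\<Sum>j\<in>N - T. grad N u (T, insert j T)) = - (\<Sum>j\<in>N - T. u T - u (toggle j T))"
    using T by (simp add: grad_def toggle_def hedge_upI sum_negf[symmetric])
  moreover have "(\<Sum>j\<in>N. u T - u (toggle j T))
                   = (\<Sum>j\<in>T. u T - u (toggle j T)) + (\<Sum>j\<in>N - T. u T - u (toggle j T))"
    using fin T by (simp add: sum.subset_diff)
  ultimately show ?thesis
    by (simp add: divergence_def)
qed

lemma divergence_grad_i:
  assumes fin: "finite N" and T: "T \<subseteq> N" and i: "i \<in> N"
  shows "divergence N (grad_i N i v) T = v T - v (toggle i T)"
proof -
  have "(\<Sum>j\<in>T. grad_i N i v (T - {j}, T)) = (\<Sum>j\<in>T. if j = i then v T - v (T - {i}) else 0)"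
  proof (rule sum.cong[OF refl])
    fix j assume j: "j \<in> T"
    then have "(T - {j}, T) \<in> hedges N"
      using T by (rule hedge_downI[rotated])
    moreover have "T = insert i (T - {j}) \<and> i \<notin> T - {j} \<longleftrightarrow> j = i"
      using j by blast
    ultimately show "grad_i N i v (T - {j}, T) = (if j = i then v T - v (T - {i}) else 0)"
      using j by (auto simp: grad_i_def insert_Diff)
  qed
  moreover have "(\<Sum>j\<in>N - T. grad_i N i v (T, insert j T))
                   = (\<Sum>j\<in>N - T. if j = i then v (insert i T) - v T else 0)"
  proof (rule sum.cong[OF refl])
    fix j assume j: "j \<in> N - T"
    then have "(T, insert j T) \<in> hedges N"
      using T by (rule hedge_upI[rotated])
    moreover have "insert j T = insert i T \<and> i \<notin> T \<longleftrightarrow> j = i"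
      using j by blast
    ultimately show "grad_i N i v (T, insert j T) = (if j = i then v (insert i T) - v T else 0)"
      using j by (auto simp: grad_i_def)
  qed
  moreover have "finite T"
    using fin T finite_subset by blast
  ultimately show ?thesis
    using fin i by (simp add: divergence_def toggle_def)
qed

lemma divergence_grad_symmetric:
  assumes fin: "finite N" and i: "i \<in> N" and T: "T \<subseteq> N"
    and W: "\<And>T. T \<subseteq> N \<Longrightarrow> W T = \<phi> (i \<in> T) (card (T - {i}))"
  defines "b \<equiv> i \<in> T" and "s \<equiv> card (T - {i})"
  shows "divergence N (grad N W) T
           = \<phi> b s - \<phi> (\<not> b) s + real s * (\<phi> b s - \<phi> b (s - 1))
             + real (card N - 1 - s) * (\<phi> b s - \<phi> b (s + 1))"
proof -
  have fT: "finite T"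
    using fin T finite_subset by blast
  have "(\<Sum>j\<in>N. W T - W (toggle j T))
          = (W T - W (toggle i T)) + (\<Sum>j\<in>N - {i}. W T - W (toggle j T))"
    using fin i by (simp add: sum.remove)
  moreover have "W T - W (toggle i T) = \<phi> b s - \<phi> (\<not> b) s"
  proof -
    have "toggle i T - {i} = T - {i}" "toggle i T \<subseteq> N"
      using T i by (auto simp: toggle_def)
    then show ?thesis
      using T W by (simp add: b_def s_def toggle_def)
  qed
  moreover have "(\<Sum>j\<in>N - {i}. W T - W (toggle j T))
     = (\<Sum>j\<in>T - {i}. W T - W (toggle j T)) + (\<Sum>j\<in>N - {i} - (T - {i}). W T - W (toggle j T))"
    using sum.subset_diff[of "T - {i}" "N - {i}"] fin T by (auto simp: add.commute)
  moreover have "(\<Sum>j\<in>T - {i}. W T - W (toggle j T)) = real s * (\<phi> b s - \<phi> b (s - 1))"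
  proof -
    have "W T - W (toggle j T) = \<phi> b s - \<phi> b (s - 1)" if "j \<in> T - {i}" for j
    proof -
      have "toggle j T - {i} = (T - {i}) - {j}" "toggle j T \<subseteq> N" "i \<in> toggle j T \<longleftrightarrow> b"
        using that T by (auto simp: toggle_def b_def)
      then show ?thesis
        using that W[of T] W[of "toggle j T"] T fT by (simp add: b_def s_def)
    qed
    then show ?thesis
      by (simp add: s_def)
  qed
  moreover have "(\<Sum>j\<in>N - {i} - (T - {i}). W T - W (toggle j T))
                   = real (card N - 1 - s) * (\<phi> b s - \<phi> b (s + 1))"
  proof -
    have "W T - W (toggle j T) = \<phi> b s - \<phi> b (s + 1)" if "j \<in> N - {i} - (T - {i})" for j
    proof -
      have "toggle j T - {i} = insert j (T - {i})" "j \<notin> T - {i}"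
        "toggle j T \<subseteq> N" "i \<in> toggle j T \<longleftrightarrow> b"
        using that T by (auto simp: toggle_def b_def)
      then show ?thesis
        using that W[of T] W[of "toggle j T"] T fT by (simp add: b_def s_def)
    qed
    moreover have "card (N - {i} - (T - {i})) = card N - 1 - s"
      using fin T i by (simp add: s_def card_Diff_subset finite_subset Diff_mono)
    ultimately show ?thesis
      by simp
  qed
  ultimately show ?thesis
    using divergence_grad[OF fin T] by simp
qed

lemma card_Diff_singleton_eq_iff_insert_eq:
  assumes fin: "finite N" and i: "i \<in> N" and T: "T \<subseteq> N"
  shows "card (T - {i}) = card N - 1 \<longleftrightarrow> insert i T = N"
proof -
  have "T - {i} \<subseteq> N - {i}"
    using T by blast
  then have "card (T - {i}) = card (N - {i}) \<longleftrightarrow> T - {i} = N - {i}"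
    using fin card_subset_eq[of "N - {i}" "T - {i}"] by auto
  moreover have "T - {i} = N - {i} \<longleftrightarrow> insert i T = N"
    using T i by blast
  ultimately show ?thesis
    using fin i by simp
qed

lemma pure_bargaining_toggle_diff:
  fixes v :: "'a set \<Rightarrow> real"
  assumes fin: "finite N" and i: "i \<in> N" and T: "T \<subseteq> N"
    and pure: "\<forall>T. T \<subseteq> N \<and> T \<noteq> N \<longrightarrow> v T = 0"
  shows "v T - v (toggle i T)
           = (if i \<in> T then 1 else -1) * (if card (T - {i}) = card N - 1 then v N else 0)"
proof (cases "i \<in> T")
  case True
  have "toggle i T = T - {i}"
    using True by (simp add: toggle_def)
  moreover have "v (T - {i}) = 0"
    using T i by (intro pure[rule_format]) blast
  moreover have "card (T - {i}) = card N - 1 \<longleftrightarrow> T = N"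
    using True card_Diff_singleton_eq_iff_insert_eq[OF fin i T] by (simp add: insert_absorb)
  moreover have "v T = (if T = N then v N else 0)"
    using T pure[rule_format, of T] by auto
  ultimately show ?thesis
    using True by simp
next
  case False
  have "toggle i T = insert i T"
    using False by (simp add: toggle_def)
  moreover have "v T = 0"
    using False T i by (intro pure[rule_format]) blast
  moreover have "v (insert i T) = (if insert i T = N then v N else 0)"
    using T i pure[rule_format, of "insert i T"] by auto
  ultimately show ?thesis
    using False card_Diff_singleton_eq_iff_insert_eq[OF fin i T] by simp
qed

lemma divergence_grad_binom_ratio:
  assumes fin: "finite N" and i: "i \<in> N" and T: "T \<subseteq> N"
    and W: "\<And>T. T \<subseteq> N \<Longrightarrow>
              W T = c * (1 + (if i \<in> T then 1 else -1) * binom_ratio (card N) (card (T - {i})))"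
  shows "divergence N (grad N W) T
           = (if i \<in> T then 1 else -1)
             * (if card (T - {i}) = card N - 1 then c * (real (card N) * 2 ^ card N) else 0)"
proof -
  obtain m where m: "card N = Suc m"
    using fin i by (metis card_0_eq emptyE not0_implies_Suc)
  define s where "s = card (T - {i})"
  define a where "a = binom_ratio (Suc m)"
  have "s \<le> card (N - {i})"
    unfolding s_def using fin T by (intro card_mono) auto
  then have sm: "s \<le> m"
    using fin i m by simp
  have "divergence N (grad N W) T
          = (if i \<in> T then 1 else -1) * c
            * ((2 + real s + real (m - s)) * a s - real s * a (s - 1) - real (m - s) * a (s + 1))"
    using divergence_grad_symmetric[OF fin i T,
        of W "\<lambda>b s. c * (1 + (if b then 1 else -1) * binom_ratio (card N) s)"] W
    by (cases "i \<in> T") (simp_all add: m a_def s_def algebra_simps)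
  also have "2 + real s + real (m - s) = real (m + 2)"
    using sm by (simp add: of_nat_diff)
  finally show ?thesis
    using binom_ratio_recurrence[OF sm] by (simp add: a_def m s_def)
qed

theorem theorem3p11:
  fixes N :: "'a set" and v :: "'a set \<Rightarrow> real" and i :: 'a and S :: "'a set"
  assumes "finite N"
    and "v {} = 0"
    and "\<forall>T. T \<subseteq> N \<and> T \<noteq> N \<longrightarrow> v T = 0"
    and "i \<in> N"
    and "S \<subseteq> N - {i}"
  shows "component_game N v i (insert i S) =
           1 / (real (card N) * 2 ^ card N) *
           (1 + real (\<Sum>k\<le>card S. card N choose k) / real (card N - 1 choose card S)) * v N \<and>
         component_game N v i S =
           1 / (real (card N) * 2 ^ card N) *
           (1 - real (\<Sum>k\<le>card S. card N choose k) / real (card N - 1 choose card S)) * v N"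
proof -
  note fin = assms(1) and pure = assms(3) and i = assms(4)
  define c where "c = v N / (real (card N) * 2 ^ card N)"
  define W where "W T = (if T \<subseteq> N then
      c * (1 + (if i \<in> T then 1 else -1) * binom_ratio (card N) (card (T - {i}))) else 0)" for T
  have "c * (real (card N) * 2 ^ card N) = v N"
    using fin i by (auto simp: c_def card_gt_0_iff)
  then have "divergence N (grad N W) T = divergence N (grad_i N i v) T" if "T \<subseteq> N" for T
    using divergence_grad_binom_ratio[OF fin i that, of W c] W_def
      pure_bargaining_toggle_diff[OF fin i that pure] divergence_grad_i[OF fin that i]
    by simp
  then have "component_game N v i = W"
    by (intro component_game_eqI[OF fin]) (auto simp: W_def l2V_def)
  moreover have "i \<notin> S" "S \<subseteq> N"
    using assms(5) by auto
  ultimately show ?thesis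
    using i by (simp add: W_def c_def binom_ratio_def)
qed

end
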